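(* Let $\mathbf{V} \in \mathbb{R}^{n \times d}$ with rows $\mathbf{v}_1, \dots, \mathbf{v}_n \in \mathbb{R}^{d}$, and let $\mathbf{A} = \mathbf{V}\mathbf{V}^T$, so $A_{ij} = \mathbf{v}_i^T \mathbf{v}_j$. Consider the correlation clustering problem for $\mathbf{A}$: maximize $$\sum_{1 \le i<j \le n} A_{ij}\, \mathbf{x}_i^T \mathbf{x}_j$$ over all choices $\mathbf{x}_i \in \{\mathbf{e}_1, \dots, \mathbf{e}_n\}$ ($i=1,\dots,n$), where $\mathbf{e}_k$ is the $k$-th standard basis vector of $\mathbb{R}^n$ (equivalently, over all partitions of $\{1,\dots,n\}$ into clusters, where $\mathbf{x}_i$ indicates the cluster of $i$, maximize the sum of $A_{ij}$ over pairs $i<j$ in the same cluster). Then this problem can be solved by partitioning the row vectors $\mathbf{v}_1,\dots,\mathbf{v}_n$ into $d+1$ clusters $C_1, \dots, C_{d+1}$ (some possibly empty) so as to maximize $$\sum_{i=1}^{d+1} \|S_i\|_2^2, \qquad S_i = \sum_{\mathbf{v} \in C_i} \mathbf{v}.$$ That is, the maximum of this quantity over partitions into $d+1$ (possibly empty) clusters is attained, and any partition attaining it (with empty clusters discarded) is an optimal solution of the correlation clustering problem for $\mathbf{A}$.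
   Context: The vector $S_i$ is called the sum point of cluster $C_i$; the sum point of an empty cluster is the zero vector. Clusters are formed from the indices $1,\dots,n$ (equivalently, from the row vectors with multiplicity). *)

theory Defs
  imports "HOL-Analysis.Analysis"
begin

text \<open>Rows v 0, ..., v (n-1) of V (indices shifted to start at 0), living in real^'d,
  so d = CARD('d).  Gram matrix A = V V^T.\<close>
definition gram :: "(nat \<Rightarrow> real^'d) \<Rightarrow> nat \<Rightarrow> nat \<Rightarrow> real" where
  "gram v i j = inner (v i) (v j)"

text \<open>Correlation clustering: x i = k encodes x_i = e_k, k < n; then x_i^T x_j is 1 if
  x i = x j and 0 otherwise.\<close>
definition cc_feasible :: "nat \<Rightarrow> (nat \<Rightarrow> nat) \<Rightarrow> bool" where
  "cc_feasible n x \<longleftrightarrow> (\<forall>i<n. x i < n)"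

definition cc_obj :: "(nat \<Rightarrow> nat \<Rightarrow> real) \<Rightarrow> nat \<Rightarrow> (nat \<Rightarrow> nat) \<Rightarrow> real" where
  "cc_obj A n x = (\<Sum>j<n. \<Sum>i<j. A i j * (if x i = x j then 1 else 0))"

definition cc_optimal :: "(nat \<Rightarrow> nat \<Rightarrow> real) \<Rightarrow> nat \<Rightarrow> (nat \<Rightarrow> nat) \<Rightarrow> bool" where
  "cc_optimal A n x \<longleftrightarrow> cc_feasible n x \<and> (\<forall>y. cc_feasible n y \<longrightarrow> cc_obj A n y \<le> cc_obj A n x)"

definition sp_feasible :: "nat \<Rightarrow> nat \<Rightarrow> (nat \<Rightarrow> nat) \<Rightarrow> bool" where
  "sp_feasible n d c \<longleftrightarrow> (\<forall>i<n. c i \<le> d)"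

definition sum_point :: "(nat \<Rightarrow> real^'d) \<Rightarrow> nat \<Rightarrow> (nat \<Rightarrow> nat) \<Rightarrow> nat \<Rightarrow> real^'d" where
  "sum_point v n c k = (\<Sum>i\<in>{i. i < n \<and> c i = k}. v i)"

definition sp_obj :: "(nat \<Rightarrow> real^'d) \<Rightarrow> nat \<Rightarrow> (nat \<Rightarrow> nat) \<Rightarrow> real" where
  "sp_obj v n c = (\<Sum>k\<le>CARD('d). (norm (sum_point v n c k))\<^sup>2)"

definition sp_optimal :: "(nat \<Rightarrow> real^'d) \<Rightarrow> nat \<Rightarrow> (nat \<Rightarrow> nat) \<Rightarrow> bool" where
  "sp_optimal v n c \<longleftrightarrow> sp_feasible n CARD('d) c \<and>
     (\<forall>c'. sp_feasible n CARD('d) c' \<longrightarrow> sp_obj v n c' \<le> sp_obj v n c)"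

end

theory Submission
  imports Defs
begin

text \<open>Writing \<open>S\<^sub>k\<close> for the sum points, \<open>\<Sum>\<^sub>k \<parallel>S\<^sub>k\<parallel>\<^sup>2 = \<Sum>\<^sub>i \<parallel>v\<^sub>i\<parallel>\<^sup>2 + 2\<cdot>(correlation clustering
  objective)\<close> for every labelling, so the two problems have the same optimal partitions once
  one knows that correlation clustering has an optimum with at most \<open>d + 1\<close> clusters. Merging
  clusters \<open>a\<close> and \<open>b\<close> changes the objective by \<open>\<langle>S\<^sub>a, S\<^sub>b\<rangle>\<close>; so if no merge helps, the
  sum points of distinct clusters are pairwise at obtuse angles, and there are at most \<open>d + 1\<close>
  such vectors in \<open>\<real>\<^sup>d\<close>.\<close>

lemma positive_combinations_eq_imp_zero:
  fixes U :: "'a::real_inner set"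
  assumes obtuse: "\<And>u w. u \<in> U \<Longrightarrow> w \<in> U \<Longrightarrow> u \<noteq> w \<Longrightarrow> inner u w < 0"
    and P: "P \<subseteq> U" "\<And>p. p \<in> P \<Longrightarrow> a p > 0"
    and N: "N \<subseteq> U" "\<And>q. q \<in> N \<Longrightarrow> b q > 0"
    and disj: "P \<inter> N = {}"
    and eq: "(\<Sum>p\<in>P. a p *\<^sub>R p) = (\<Sum>q\<in>N. b q *\<^sub>R q)"
  shows "(\<Sum>p\<in>P. a p *\<^sub>R p) = 0"
proof -
  let ?W = "\<Sum>p\<in>P. a p *\<^sub>R p"
  have "inner ?W ?W = inner (\<Sum>p\<in>P. a p *\<^sub>R p) (\<Sum>q\<in>N. b q *\<^sub>R q)"
    by (simp only: eq [symmetric])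
  also have "\<dots> = (\<Sum>p\<in>P. \<Sum>q\<in>N. inner (a p *\<^sub>R p) (b q *\<^sub>R q))"
    by (simp only: inner_sum_left inner_sum_right sum.swap[of _ N P])
  also have "\<dots> = (\<Sum>p\<in>P. \<Sum>q\<in>N. a p * b q * inner p q)"
    by (intro sum.cong refl) (simp add: mult.assoc)
  also have "\<dots> \<le> 0"
  proof (intro sum_nonpos)
    fix p q assume "p \<in> P" "q \<in> N"
    with P N disj have "inner p q < 0" "a p * b q > 0" by (auto intro!: obtuse)
    then show "a p * b q * inner p q \<le> 0" by (simp add: mult_pos_neg less_imp_le)
  qed
  finally have "inner ?W ?W = 0"
    using inner_ge_zero[of ?W] by linarith
  then show ?thesis by simp
qed

lemma positive_combination_neq_zero:
  fixes U :: "'a::real_inner set"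
  assumes obtuse: "\<And>u w. u \<in> U \<Longrightarrow> w \<in> U \<Longrightarrow> u \<noteq> w \<Longrightarrow> inner u w < 0"
    and P: "finite P" "P \<noteq> {}" "P \<subseteq> U" "\<And>p. p \<in> P \<Longrightarrow> a p > 0"
    and u: "u \<in> U" "u \<notin> P"
  shows "(\<Sum>p\<in>P. a p *\<^sub>R p) \<noteq> 0"
proof -
  have "inner (\<Sum>p\<in>P. a p *\<^sub>R p) u = (\<Sum>p\<in>P. a p * inner p u)"
    by (simp add: inner_sum_left)
  also have "\<dots> < (\<Sum>p\<in>P. 0)"
  proof (rule sum_strict_mono)
    fix p assume "p \<in> P"
    with P u have "inner p u < 0" "a p > 0" by (auto intro!: obtuse)
    then show "a p * inner p u < 0" by (simp add: mult_pos_neg)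
  qed (use P in auto)
  finally show ?thesis by auto
qed

lemma card_le_DIM_Suc_if_pairwise_obtuse:
  fixes U :: "'a::euclidean_space set"
  assumes fin: "finite U"
    and obtuse: "\<And>u w. u \<in> U \<Longrightarrow> w \<in> U \<Longrightarrow> u \<noteq> w \<Longrightarrow> inner u w < 0"
  shows "card U \<le> DIM('a) + 1"
proof (rule ccontr)
  assume "\<not> ?thesis"
  then have "U \<noteq> {}" by auto
  then obtain u where u: "u \<in> U" by blast
  with fin \<open>\<not> ?thesis\<close> have "card (U - {u}) > DIM('a)"
    by simp
  then have "dependent (U - {u})" by (simp add: dependent_biggerset)
  then obtain t c where t: "finite t" "t \<subseteq> U - {u}" "(\<Sum>w\<in>t. c w *\<^sub>R w) = 0"
      and nontrivial: "\<exists>w\<in>t. c w \<noteq> 0"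
    unfolding dependent_explicit by blast
  \<comment> \<open>Split the dependency into two equal positive combinations: both vanish, and a
    nonempty positive combination has negative inner product with \<open>u\<close>.\<close>
  define P where "P = {w\<in>t. c w > 0}"
  define N where "N = {w\<in>t. c w < 0}"
  have fin_PN: "finite P" "finite N" and sub_PN: "P \<subseteq> U - {u}" "N \<subseteq> U - {u}"
    using t by (auto simp: P_def N_def)
  have "(\<Sum>w\<in>t. c w *\<^sub>R w) = (\<Sum>w\<in>P \<union> N. c w *\<^sub>R w)"
    by (rule sum.mono_neutral_right) (use t in \<open>auto simp: P_def N_def\<close>)
  also have "\<dots> = (\<Sum>p\<in>P. c p *\<^sub>R p) - (\<Sum>q\<in>N. (- c q) *\<^sub>R q)"
    by (subst sum.union_disjoint) (use fin_PN in \<open>auto simp: P_def N_def sum_negf\<close>)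
  finally have eq: "(\<Sum>p\<in>P. c p *\<^sub>R p) = (\<Sum>q\<in>N. (- c q) *\<^sub>R q)"
    using t(3) by simp
  have zero: "(\<Sum>p\<in>P. c p *\<^sub>R p) = 0"
    by (rule positive_combinations_eq_imp_zero[OF obtuse _ _ _ _ _ eq])
      (use sub_PN in \<open>auto simp: P_def N_def\<close>)
  have "P = {}"
    using positive_combination_neq_zero[OF obtuse fin_PN(1) _ _ _ u] zero sub_PN
    by (auto simp: P_def)
  moreover have "N = {}"
    using positive_combination_neq_zero[OF obtuse fin_PN(2) _ _ _ u, of "\<lambda>q. - c q"] zero eq sub_PN
    by (auto simp: N_def)
  ultimately show False
    using nontrivial by (auto simp: P_def N_def neq_iff)
qed

definition cluster_gram_sum :: "(nat \<Rightarrow> real^'d) \<Rightarrow> nat \<Rightarrow> (nat \<Rightarrow> nat) \<Rightarrow> real" where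
  "cluster_gram_sum v n c = (\<Sum>i<n. \<Sum>j<n. if c i = c j then inner (v i) (v j) else 0)"

lemma sum_point_eq_sum_lessThan:
  "sum_point v n c k = (\<Sum>i<n. if c i = k then v i else 0)"
  unfolding sum_point_def by (simp add: sum.If_cases lessThan_def Collect_conj_eq Int_commute)

lemma sum_norm_sum_point_sq:
  assumes "finite K" and "\<And>i. i < n \<Longrightarrow> c i \<in> K"
  shows "(\<Sum>k\<in>K. (norm (sum_point v n c k))\<^sup>2) = cluster_gram_sum v n c"
proof -
  have "(\<Sum>k\<in>K. (norm (sum_point v n c k))\<^sup>2)
      = (\<Sum>k\<in>K. \<Sum>i<n. \<Sum>j<n. if c i = k \<and> c j = k then inner (v i) (v j) else 0)"
    unfolding power2_norm_eq_inner sum_point_eq_sum_lessThan inner_sum_left inner_sum_right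
    by (intro sum.cong refl) (auto simp: inner_commute)
  also have "\<dots> = (\<Sum>i<n. \<Sum>j<n. \<Sum>k\<in>K. if c i = k \<and> c j = k then inner (v i) (v j) else 0)"
    by (simp add: sum.swap[of _ K])
  also have "\<dots> = cluster_gram_sum v n c"
    unfolding cluster_gram_sum_def
  proof (intro sum.cong refl)
    fix i j assume "i \<in> {..<n}"
    then have "c i \<in> K" using assms(2) by auto
    then show "(\<Sum>k\<in>K. if c i = k \<and> c j = k then inner (v i) (v j) else 0)
        = (if c i = c j then inner (v i) (v j) else 0)"
      using assms(1) by (simp add: sum.delta conj_commute[of "c i = _"] eq_commute[of "c i"] cong: conj_cong)
  qed
  finally show ?thesis .
qed

lemma cluster_gram_sum_eq_cc_obj:
  "cluster_gram_sum v n c = (\<Sum>i<n. (norm (v i))\<^sup>2) + 2 * cc_obj (gram v) n c"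
proof (induction n)
  case 0
  then show ?case by (simp add: cluster_gram_sum_def cc_obj_def)
next
  case (Suc n)
  let ?new = "\<Sum>i<n. if c i = c n then inner (v i) (v n) else 0"
  have "(\<Sum>j<n. if c n = c j then inner (v n) (v j) else 0) = ?new"
    by (intro sum.cong refl) (auto simp: inner_commute)
  then have "cluster_gram_sum v (Suc n) c = cluster_gram_sum v n c + 2 * ?new + inner (v n) (v n)"
    unfolding cluster_gram_sum_def by (simp add: sum.distrib)
  then show ?case
    using Suc by (simp add: cc_obj_def gram_def power2_norm_eq_inner algebra_simps if_distrib cong: if_cong)
qed

lemma sp_obj_eq_cc_obj:
  fixes v :: "nat \<Rightarrow> real^'d"
  assumes "sp_feasible n CARD('d) c"
  shows "sp_obj v n c = (\<Sum>i<n. (norm (v i))\<^sup>2) + 2 * cc_obj (gram v) n c"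
  using assms unfolding sp_obj_def sp_feasible_def
  by (subst sum_norm_sum_point_sq) (auto simp: cluster_gram_sum_eq_cc_obj)

lemma cc_obj_cong_clusters:
  assumes "\<forall>i<n. \<forall>j<n. x i = x j \<longleftrightarrow> y i = y j"
  shows "cc_obj A n x = cc_obj A n y"
  unfolding cc_obj_def by (intro sum.cong refl) (use assms in auto)

lemma cc_obj_merge_clusters:
  fixes v :: "nat \<Rightarrow> real^'d"
  assumes "a \<noteq> b"
  shows "cc_obj (gram v) n (\<lambda>i. if y i = b then a else y i)
       = cc_obj (gram v) n y + inner (sum_point v n y a) (sum_point v n y b)"
proof -
  define m where "m = (\<lambda>i. if y i = b then a else y i)"
  define K where "K = insert a (insert b (y ` {..<n}))"
  define S where "S = sum_point v n y"
  define T where "T = (\<Sum>k\<in>K - {a} - {b}. (norm (S k))\<^sup>2)"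
  have fin: "finite K" and "a \<in> K" "b \<in> K - {a}"
    using assms by (auto simp: K_def)
  then have split: "(\<Sum>k\<in>K. f k) = f a + f b + (\<Sum>k\<in>K - {a} - {b}. f k)" for f :: "nat \<Rightarrow> real"
    by (simp add: sum.remove[of K a] sum.remove[of "K - {a}" b])
  have "sum_point v n m a = S a + S b"
    unfolding S_def sum_point_eq_sum_lessThan m_def using assms
    by (simp add: sum.distrib[symmetric]) (intro sum.cong refl, auto)
  moreover have "sum_point v n m b = 0"
    unfolding sum_point_eq_sum_lessThan m_def using assms by (intro sum.neutral) auto
  moreover have "(\<Sum>k\<in>K - {a} - {b}. (norm (sum_point v n m k))\<^sup>2) = T"
    unfolding T_def S_def sum_point_eq_sum_lessThan m_def
    by (intro sum.cong refl arg_cong[where f = "\<lambda>x. (norm x)\<^sup>2"]) auto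
  ultimately have "(\<Sum>k\<in>K. (norm (sum_point v n m k))\<^sup>2) = (norm (S a + S b))\<^sup>2 + T"
    by (simp add: split)
  moreover have "(\<Sum>k\<in>K. (norm (S k))\<^sup>2) = (norm (S a))\<^sup>2 + (norm (S b))\<^sup>2 + T"
    by (simp add: split T_def)
  moreover have "(norm (S a + S b))\<^sup>2 = (norm (S a))\<^sup>2 + (norm (S b))\<^sup>2 + 2 * inner (S a) (S b)"
    by (simp add: power2_norm_eq_inner inner_add_left inner_add_right inner_commute)
  moreover have "i < n \<Longrightarrow> m i \<in> K" "i < n \<Longrightarrow> y i \<in> K" for i
    by (auto simp: m_def K_def)
  ultimately have "cluster_gram_sum v n m = cluster_gram_sum v n y + 2 * inner (S a) (S b)"
    using sum_norm_sum_point_sq[OF fin, of n m v] sum_norm_sum_point_sq[OF fin, of n y v]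
    by (simp add: S_def)
  then show ?thesis
    unfolding m_def[symmetric] S_def cluster_gram_sum_eq_cc_obj by simp
qed

lemma exists_sp_feasible_same_clusters:
  assumes "card (y ` {..<n}) \<le> d + 1"
  shows "\<exists>c. sp_feasible n d c \<and> (\<forall>i<n. \<forall>j<n. c i = c j \<longleftrightarrow> y i = y j)"
proof -
  obtain h where h: "bij_betw h (y ` {..<n}) {0..<card (y ` {..<n})}"
    using ex_bij_betw_finite_nat by blast
  then have "sp_feasible n d (h \<circ> y)"
    using assms unfolding sp_feasible_def by (fastforce dest: bij_betw_apply)
  moreover have "\<forall>i<n. \<forall>j<n. (h \<circ> y) i = (h \<circ> y) j \<longleftrightarrow> y i = y j"
    using h unfolding bij_betw_def inj_on_def by auto
  ultimately show ?thesis by blast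
qed

lemma exists_merge_not_decreasing_cc_obj:
  fixes v :: "nat \<Rightarrow> real^'d"
  assumes "card (y ` {..<n}) > CARD('d) + 1"
  obtains a b where "a \<in> y ` {..<n}" "b \<in> y ` {..<n}" "a \<noteq> b"
    and "cc_obj (gram v) n y \<le> cc_obj (gram v) n (\<lambda>i. if y i = b then a else y i)"
proof (rule ccontr)
  assume "\<not> thesis"
  with that have no_merge: "cc_obj (gram v) n (\<lambda>i. if y i = b then a else y i) < cc_obj (gram v) n y"
    if "a \<in> y ` {..<n}" "b \<in> y ` {..<n}" "a \<noteq> b" for a b
    using that by (meson not_le)
  define L where "L = y ` {..<n}"
  define S where "S = sum_point v n y"
  have obtuse: "inner (S a) (S b) < 0" if "a \<in> L" "b \<in> L" "a \<noteq> b" for a b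
    using no_merge[of a b] cc_obj_merge_clusters[OF \<open>a \<noteq> b\<close>, of v n y] that
    unfolding L_def S_def by linarith
  have "inj_on S L"
  proof (rule inj_onI, rule ccontr)
    fix a b assume "a \<in> L" "b \<in> L" "S a = S b" "a \<noteq> b"
    then show False using obtuse[of a b] inner_ge_zero[of "S b"] by simp
  qed
  moreover have "card (S ` L) \<le> DIM(real^'d) + 1"
  proof (rule card_le_DIM_Suc_if_pairwise_obtuse)
    fix u w assume "u \<in> S ` L" "w \<in> S ` L" "u \<noteq> w"
    then show "inner u w < 0" using obtuse by blast
  qed (simp add: L_def)
  ultimately show False
    using assms by (simp add: card_image L_def)
qed

lemma cc_obj_le_sp_feasible:
  fixes v :: "nat \<Rightarrow> real^'d"
  shows "\<exists>c. sp_feasible n CARD('d) c \<and> cc_obj (gram v) n y \<le> cc_obj (gram v) n c"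
proof (induction "card (y ` {..<n})" arbitrary: y rule: less_induct)
  case less
  show ?case
  proof (cases "card (y ` {..<n}) \<le> CARD('d) + 1")
    case True
    then obtain c where "sp_feasible n CARD('d) c" "\<forall>i<n. \<forall>j<n. c i = c j \<longleftrightarrow> y i = y j"
      using exists_sp_feasible_same_clusters by blast
    then show ?thesis
      using cc_obj_cong_clusters[of n c y] by auto
  next
    case False
    then have "card (y ` {..<n}) > CARD('d) + 1" by simp
    then obtain a b where ab: "a \<in> y ` {..<n}" "b \<in> y ` {..<n}" "a \<noteq> b"
      and le: "cc_obj (gram v) n y \<le> cc_obj (gram v) n (\<lambda>i. if y i = b then a else y i)"
      by (rule exists_merge_not_decreasing_cc_obj)
    let ?m = "\<lambda>i. if y i = b then a else y i"
    have "?m ` {..<n} = y ` {..<n} - {b}"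
      using ab by (auto simp: image_iff)
    moreover have "card (y ` {..<n} - {b}) < card (y ` {..<n})"
      using ab(2) by (intro card_Diff1_less) auto
    ultimately have "card (?m ` {..<n}) < card (y ` {..<n})"
      by (simp only:)
    then obtain c where "sp_feasible n CARD('d) c" "cc_obj (gram v) n ?m \<le> cc_obj (gram v) n c"
      using less by blast
    with le show ?thesis by auto
  qed
qed

lemma sp_obj_cong:
  assumes "\<forall>i<n. c i = c' i"
  shows "sp_obj v n c = sp_obj v n c'"
proof -
  have "{i. i < n \<and> c i = k} = {i. i < n \<and> c' i = k}" for k
    using assms by auto
  then show ?thesis by (simp add: sp_obj_def sum_point_def)
qed

lemma sp_optimal_exists:
  fixes v :: "nat \<Rightarrow> real^'d"
  shows "\<exists>c. sp_optimal v n c"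
proof -
  define R where "R = {..<n} \<rightarrow>\<^sub>E {..CARD('d)}"
  have fin: "finite (sp_obj v n ` R)"
    unfolding R_def by (intro finite_imageI finite_PiE) auto
  have "restrict (\<lambda>_. 0) {..<n} \<in> R" by (simp add: R_def)
  then have "Max (sp_obj v n ` R) \<in> sp_obj v n ` R"
    using fin by (intro Max_in) auto
  then obtain c where c: "c \<in> R" "sp_obj v n c = Max (sp_obj v n ` R)"
    by (metis imageE)
  have "sp_obj v n c' \<le> sp_obj v n c" if "sp_feasible n CARD('d) c'" for c'
  proof -
    have "restrict c' {..<n} \<in> R"
      using that by (simp add: R_def sp_feasible_def)
    then have "sp_obj v n (restrict c' {..<n}) \<le> sp_obj v n c"
      unfolding c(2) using fin by (intro Max_ge) simp_all
    then show ?thesis by (simp add: sp_obj_cong[of n "restrict c' {..<n}" c'])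
  qed
  moreover have "sp_feasible n CARD('d) c"
    using c(1) by (auto simp: R_def sp_feasible_def)
  ultimately show ?thesis unfolding sp_optimal_def by blast
qed

lemma exists_cc_feasible_same_clusters:
  "\<exists>x. cc_feasible n x \<and> (\<forall>i<n. \<forall>j<n. x i = x j \<longleftrightarrow> c i = c j)"
proof -
  define x where "x i = (LEAST j. c j = c i)" for i
  have rep: "c (x i) = c i" for i unfolding x_def by (rule LeastI) (rule refl)
  have "x i = x j \<longleftrightarrow> c i = c j" for i j
  proof
    assume "x i = x j"
    then show "c i = c j" using rep by metis
  qed (simp add: x_def)
  moreover have "cc_feasible n x"
    unfolding cc_feasible_def x_def by (auto intro: le_less_trans[OF Least_le])
  ultimately show ?thesis by blast
qed

lemma cc_optimal_if_sp_optimal: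
  fixes v :: "nat \<Rightarrow> real^'d"
  assumes opt: "sp_optimal v n c"
    and x: "cc_feasible n x" "\<forall>i<n. \<forall>j<n. x i = x j \<longleftrightarrow> c i = c j"
  shows "cc_optimal (gram v) n x"
  unfolding cc_optimal_def
proof (intro conjI allI impI x(1))
  fix y
  obtain c' where c': "sp_feasible n CARD('d) c'" "cc_obj (gram v) n y \<le> cc_obj (gram v) n c'"
    using cc_obj_le_sp_feasible by blast
  have "sp_obj v n c' \<le> sp_obj v n c" "sp_feasible n CARD('d) c"
    using opt c'(1) by (simp_all add: sp_optimal_def)
  then have "cc_obj (gram v) n c' \<le> cc_obj (gram v) n c"
    using sp_obj_eq_cc_obj[OF c'(1), of v] sp_obj_eq_cc_obj[of n c v] by simp
  also have "\<dots> = cc_obj (gram v) n x"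
    using cc_obj_cong_clusters[OF x(2)] by simp
  finally show "cc_obj (gram v) n y \<le> cc_obj (gram v) n x"
    using c'(2) by simp
qed

theorem theorem1:
  fixes v :: "nat \<Rightarrow> real^'d" and n :: nat
  shows "(\<exists>c. sp_optimal v n c) \<and>
    (\<forall>c. sp_optimal v n c \<longrightarrow>
       (\<exists>x. cc_optimal (gram v) n x \<and> (\<forall>i<n. \<forall>j<n. x i = x j \<longleftrightarrow> c i = c j)))"
proof (intro conjI allI impI)
  show "\<exists>c. sp_optimal v n c" by (rule sp_optimal_exists)
  fix c assume "sp_optimal v n c"
  moreover obtain x where "cc_feasible n x" "\<forall>i<n. \<forall>j<n. x i = x j \<longleftrightarrow> c i = c j"
    using exists_cc_feasible_same_clusters by blast
  ultimately show "\<exists>x. cc_optimal (gram v) n x \<and> (\<forall>i<n. \<forall>j<n. x i = x j \<longleftrightarrow> c i = c j)"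
    using cc_optimal_if_sp_optimal by blast
qed

end
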